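(* Let $G$ be a connected nontrivial graph with $m$ vertices and let $n\geq4$. If $\min\{n^2\lambda(G),\ (n-1)(m+2e(G))\}> 2n\delta(G)+2n-4$, then $G\boxtimes K_n$ is super restricted edge-connected.
   Context: All graphs are finite, simple and undirected; "nontrivial" means having at least two vertices. $K_n$ denotes the complete graph on $n$ vertices. For a graph $G$: $e(G)=|E(G)|$; $\delta(G)$ is the minimum degree; $\lambda(G)$ is the edge-connectivity. A restricted edge-cut of a connected graph $G$ is a set $S\subseteq E(G)$ such that $G-S$ is disconnected and every component of $G-S$ has at least $2$ vertices; $\lambda'(G)$ is the minimum cardinality of a restricted edge-cut. A graph is super restricted edge-connected if every minimum restricted edge-cut $S$ isolates an edge, i.e. some component of $G-S$ consists of exactly two (adjacent) vertices. The strong product $G\boxtimes H$ has vertex set $V(G)\times V(H)$, with $(x_1,y_1)$ and $(x_2,y_2)$ adjacent iff either $x_1=x_2$ and $y_1y_2\in E(H)$, or $y_1=y_2$ and $x_1x_2\in E(G)$, or $x_1x_2\in E(G)$ and $y_1y_2\in E(H)$. *)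

theory Defs
  imports Main
begin

type_synonym 'a graph = "'a set \<times> 'a set set"

definition verts :: "'a graph \<Rightarrow> 'a set" where "verts G = fst G"
definition edges :: "'a graph \<Rightarrow> 'a set set" where "edges G = snd G"

definition simple_graph :: "'a graph \<Rightarrow> bool" where
  "simple_graph G \<longleftrightarrow> finite (verts G) \<and>
     (\<forall>e\<in>edges G. \<exists>x y. x \<noteq> y \<and> x \<in> verts G \<and> y \<in> verts G \<and> e = {x, y})"

definition adj_rel :: "'a graph \<Rightarrow> ('a \<times> 'a) set" where
  "adj_rel G = {(x, y). {x, y} \<in> edges G \<and> x \<noteq> y}"

definition graph_connected :: "'a graph \<Rightarrow> bool" where
  "graph_connected G \<longleftrightarrow> verts G \<noteq> {} \<and>
     (\<forall>x\<in>verts G. \<forall>y\<in>verts G. (x, y) \<in> (adj_rel G)\<^sup>*)"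

definition del_edges :: "'a graph \<Rightarrow> 'a set set \<Rightarrow> 'a graph" where
  "del_edges G S = (verts G, edges G - S)"

definition components :: "'a graph \<Rightarrow> 'a set set" where
  "components G = (\<lambda>x. {y \<in> verts G. (x, y) \<in> (adj_rel G)\<^sup>*}) ` verts G"

definition degree :: "'a graph \<Rightarrow> 'a \<Rightarrow> nat" where
  "degree G v = card {e \<in> edges G. v \<in> e}"

definition min_degree :: "'a graph \<Rightarrow> nat" where
  "min_degree G = Min (degree G ` verts G)"

definition edge_cut :: "'a graph \<Rightarrow> 'a set set \<Rightarrow> bool" where
  "edge_cut G S \<longleftrightarrow> S \<subseteq> edges G \<and> \<not> graph_connected (del_edges G S)"

definition edge_connectivity :: "'a graph \<Rightarrow> nat" where
  "edge_connectivity G = Min (card ` {S. edge_cut G S})"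

definition restricted_edge_cut :: "'a graph \<Rightarrow> 'a set set \<Rightarrow> bool" where
  "restricted_edge_cut G S \<longleftrightarrow> S \<subseteq> edges G \<and> \<not> graph_connected (del_edges G S) \<and>
     (\<forall>C\<in>components (del_edges G S). card C \<ge> 2)"

definition min_restricted_edge_cut :: "'a graph \<Rightarrow> 'a set set \<Rightarrow> bool" where
  "min_restricted_edge_cut G S \<longleftrightarrow> restricted_edge_cut G S \<and>
     (\<forall>T. restricted_edge_cut G T \<longrightarrow> card S \<le> card T)"

definition super_restricted_edge_connected :: "'a graph \<Rightarrow> bool" where
  "super_restricted_edge_connected G \<longleftrightarrow>
     (\<forall>S. min_restricted_edge_cut G S \<longrightarrow> (\<exists>C\<in>components (del_edges G S). card C = 2))"

definition complete_graph :: "nat \<Rightarrow> nat graph" where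
  "complete_graph n = ({0..<n}, {{x, y} | x y. x < n \<and> y < n \<and> x \<noteq> y})"

definition strong_product :: "'a graph \<Rightarrow> 'b graph \<Rightarrow> ('a \<times> 'b) graph" where
  "strong_product G H = (verts G \<times> verts H,
     {{(x1, y1), (x2, y2)} | x1 y1 x2 y2.
        x1 \<in> verts G \<and> x2 \<in> verts G \<and> y1 \<in> verts H \<and> y2 \<in> verts H \<and>
        ((x1 = x2 \<and> {y1, y2} \<in> edges H) \<or> (y1 = y2 \<and> {x1, x2} \<in> edges G) \<or>
         ({x1, x2} \<in> edges G \<and> {y1, y2} \<in> edges H))})"

end

theory Submission
  imports Defs
begin

text \<open>Let \<open>S\<close> be a minimum restricted edge-cut of \<open>H = G \<boxtimes> K\<^sub>n\<close> that isolates no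
  edge. Then some component \<open>C\<close> of \<open>H - S\<close> and its complement both have at least three
  vertices, and \<open>S\<close> contains every edge leaving \<open>C\<close>. If \<open>C\<close> has \<open>a x\<close> vertices in the
  fibre over \<open>x\<close>, the number of these edges is \<open>\<Sum>\<^sub>x a x (n - a x) + \<Sum>\<^sub>x\<^sub>y a x (n - a y)\<close>,
  the second sum over ordered adjacent pairs. Moving weight between two fibres changes this
  count along a concave parabola, so it can be decreased until at most one fibre is split.
  Then either \<open>C\<close> or its complement lies in a single fibre, and the count is at least
  \<open>k (n - k) + k n \<delta>\<close> with \<open>3 \<le> k \<le> n\<close>; or rounding the split fibre down and up yields two
  edge-cuts of \<open>G\<close>, and the count is at least \<open>n\<^sup>2 \<lambda>\<close>. Both exceed \<open>2n\<delta> + 2n - 4\<close>, the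
  number of edges leaving two vertices in the fibre of a vertex of minimum degree,
  contradicting minimality. Only the first term of the minimum in the hypothesis is needed.\<close>

lemma simple_graph_edgeD:
  assumes "simple_graph G" and "{x, y} \<in> edges G"
  shows "x \<in> verts G" and "y \<in> verts G" and "x \<noteq> y"
proof -
  obtain a b where "a \<noteq> b" "a \<in> verts G" "b \<in> verts G" "{x, y} = {a, b}"
    using assms unfolding simple_graph_def by meson
  then show "x \<in> verts G" "y \<in> verts G" "x \<noteq> y"
    by (auto simp: doubleton_eq_iff)
qed

lemma simple_graph_finite_verts: "simple_graph G \<Longrightarrow> finite (verts G)"
  unfolding simple_graph_def by simp

lemma simple_graph_edges_subset:
  assumes "simple_graph G" and "e \<in> edges G"
  shows "e \<subseteq> verts G"
proof -
  obtain x y where "x \<in> verts G" "y \<in> verts G" "e = {x, y}"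
    using assms unfolding simple_graph_def by meson
  then show ?thesis by simp
qed

lemma simple_graph_finite_edges:
  assumes "simple_graph G"
  shows "finite (edges G)"
proof -
  have "edges G \<subseteq> Pow (verts G)"
    using simple_graph_edges_subset[OF assms] by blast
  then show ?thesis
    using simple_graph_finite_verts[OF assms] by (meson finite_Pow_iff finite_subset)
qed

lemma simple_graph_del_edges: "simple_graph G \<Longrightarrow> simple_graph (del_edges G S)"
  unfolding simple_graph_def del_edges_def verts_def edges_def by auto

lemma verts_del_edges [simp]: "verts (del_edges G S) = verts G"
  unfolding del_edges_def verts_def by simp

lemma edges_del_edges [simp]: "edges (del_edges G S) = edges G - S"
  unfolding del_edges_def edges_def by simp

lemma adj_rel_iff: "simple_graph G \<Longrightarrow> (x, y) \<in> adj_rel G \<longleftrightarrow> {x, y} \<in> edges G"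
  unfolding adj_rel_def by (auto dest: simple_graph_edgeD(3))

lemma adj_rel_irrefl: "(x, x) \<notin> adj_rel G"
  unfolding adj_rel_def by simp

lemma adj_rel_sym: "(x, y) \<in> adj_rel G \<Longrightarrow> (y, x) \<in> adj_rel G"
  unfolding adj_rel_def by (auto simp: insert_commute)

lemma adj_rel_subset: "simple_graph G \<Longrightarrow> adj_rel G \<subseteq> verts G \<times> verts G"
  unfolding adj_rel_def by (auto dest: simple_graph_edgeD(1,2))

lemma finite_adj_rel: "simple_graph G \<Longrightarrow> finite (adj_rel G)"
  using adj_rel_subset simple_graph_finite_verts by (metis finite_SigmaI finite_subset)

lemma degree_eq_card_adj:
  assumes "simple_graph G"
  shows "degree G w = card {y. (w, y) \<in> adj_rel G}"
proof -
  have "{e \<in> edges G. w \<in> e} = (\<lambda>y. {w, y}) ` {y. (w, y) \<in> adj_rel G}"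
  proof (intro equalityI subsetI)
    fix e assume e: "e \<in> {e \<in> edges G. w \<in> e}"
    then obtain a b where ab: "a \<noteq> b" "e = {a, b}"
      using assms unfolding simple_graph_def by blast
    then have "e = {w, if a = w then b else a}"
      using e by auto
    moreover have "(w, if a = w then b else a) \<in> adj_rel G"
      using e ab calculation unfolding adj_rel_def by auto
    ultimately show "e \<in> (\<lambda>y. {w, y}) ` {y. (w, y) \<in> adj_rel G}"
      by blast
  qed (auto simp: adj_rel_def)
  moreover have "inj_on (\<lambda>y. {w, y}) {y. (w, y) \<in> adj_rel G}"
    unfolding inj_on_def by (auto simp: doubleton_eq_iff)
  ultimately show ?thesis
    unfolding degree_def by (simp add: card_image)
qed

lemma min_degree_le: "simple_graph G \<Longrightarrow> w \<in> verts G \<Longrightarrow> min_degree G \<le> degree G w"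
  unfolding min_degree_def by (simp add: simple_graph_finite_verts)

lemma min_degree_attained:
  assumes "simple_graph G" and "verts G \<noteq> {}"
  obtains w where "w \<in> verts G" and "degree G w = min_degree G"
proof -
  have "min_degree G \<in> degree G ` verts G"
    unfolding min_degree_def using assms by (intro Min_in) (auto simp: simple_graph_finite_verts)
  then show ?thesis using that by auto
qed

lemma degree_pos_if_connected:
  assumes sg: "simple_graph G" and "graph_connected G" and "2 \<le> card (verts G)"
    and w: "w \<in> verts G"
  shows "0 < degree G w"
proof -
  have "card (verts G - {w}) = card (verts G) - 1"
    using w simple_graph_finite_verts[OF sg] by (simp add: card_Diff_singleton)
  then have "card (verts G - {w}) \<noteq> 0"
    using assms(3) by linarith
  then have "verts G - {w} \<noteq> {}"
    by (metis card.empty)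
  then obtain y where y: "y \<in> verts G" "y \<noteq> w"
    by blast
  then have "(w, y) \<in> (adj_rel G)\<^sup>*"
    using assms(2) w unfolding graph_connected_def by blast
  then obtain z where "(w, z) \<in> adj_rel G"
    using y(2) by (metis converse_rtranclE)
  moreover have "{z. (w, z) \<in> adj_rel G} \<subseteq> verts G"
    using adj_rel_subset[OF sg] by auto
  then have "finite {z. (w, z) \<in> adj_rel G}"
    using simple_graph_finite_verts[OF sg] finite_subset by blast
  ultimately show ?thesis
    unfolding degree_eq_card_adj[OF sg] by (auto simp: card_gt_0_iff)
qed

definition boundary_arcs :: "'a graph \<Rightarrow> 'a set \<Rightarrow> ('a \<times> 'a) set" where
  "boundary_arcs H X = {(u, v). u \<in> X \<and> v \<in> verts H - X \<and> {u, v} \<in> edges H}"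

definition edge_boundary :: "'a graph \<Rightarrow> 'a set \<Rightarrow> 'a set set" where
  "edge_boundary H X = (\<lambda>(u, v). {u, v}) ` boundary_arcs H X"

lemma card_edge_boundary: "card (edge_boundary H X) = card (boundary_arcs H X)"
proof -
  have "inj_on (\<lambda>(u, v). {u, v}) (boundary_arcs H X)"
    unfolding inj_on_def boundary_arcs_def by (auto simp: doubleton_eq_iff)
  then show ?thesis
    unfolding edge_boundary_def by (rule card_image)
qed

lemma edge_boundary_subset: "edge_boundary H X \<subseteq> edges H"
  unfolding edge_boundary_def boundary_arcs_def by auto

lemma edge_boundaryI:
  "u \<in> X \<Longrightarrow> v \<in> verts H \<Longrightarrow> v \<notin> X \<Longrightarrow> {u, v} \<in> edges H \<Longrightarrow> {u, v} \<in> edge_boundary H X"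
  unfolding edge_boundary_def boundary_arcs_def by force

lemma reachable_without_edge_boundary:
  assumes "simple_graph H"
    and "(u, v) \<in> (adj_rel (del_edges H (edge_boundary H X)))\<^sup>*" and "u \<in> X"
  shows "v \<in> X"
  using assms(2,3)
proof (induction rule: rtrancl_induct)
  case (step z w)
  then have "{z, w} \<in> edges H" and "{z, w} \<notin> edge_boundary H X" and "z \<in> X"
    unfolding adj_rel_def by auto
  then show "w \<in> X"
    by (meson edge_boundaryI simple_graph_edgeD(2)[OF assms(1)])
qed

lemma del_edge_boundary_disconnected:
  assumes "simple_graph H" and "u \<in> X" and "u \<in> verts H" and "v \<in> verts H" and "v \<notin> X"
  shows "\<not> graph_connected (del_edges H (edge_boundary H X))"
  using reachable_without_edge_boundary[OF assms(1) _ assms(2)] assms(3-5)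
  unfolding graph_connected_def by auto

lemma edge_connectivity_le_card_edge_boundary:
  assumes sg: "simple_graph G" and "u \<in> X" and "u \<in> verts G" and "v \<in> verts G" and "v \<notin> X"
  shows "edge_connectivity G \<le> card (edge_boundary G X)"
proof -
  have "edge_cut G (edge_boundary G X)"
    unfolding edge_cut_def using edge_boundary_subset del_edge_boundary_disconnected[OF assms] by blast
  moreover have "finite {S. edge_cut G S}"
    using simple_graph_finite_edges[OF sg] unfolding edge_cut_def by simp
  ultimately show ?thesis
    unfolding edge_connectivity_def by (simp add: Min_le)
qed

lemma component_edge_boundary_subset:
  assumes "C \<in> components (del_edges H S)"
  shows "edge_boundary H C \<subseteq> S"
proof
  let ?R = "adj_rel (del_edges H S)"
  obtain r where C: "C = {y \<in> verts H. (r, y) \<in> ?R\<^sup>*}"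
    using assms unfolding components_def by auto
  fix e assume "e \<in> edge_boundary H C"
  then obtain u v where e: "e = {u, v}" "u \<in> C" "v \<in> verts H" "v \<notin> C" "{u, v} \<in> edges H"
    unfolding edge_boundary_def boundary_arcs_def by auto
  show "e \<in> S"
  proof (rule ccontr)
    assume "e \<notin> S"
    then have "(u, v) \<in> ?R"
      using e unfolding adj_rel_def by auto
    moreover have "(r, u) \<in> ?R\<^sup>*"
      using e C by simp
    ultimately have "(r, v) \<in> ?R\<^sup>*"
      by simp
    then show False
      using e C by simp
  qed
qed

lemma components_card_ge_2:
  assumes "simple_graph K" and "\<And>r. r \<in> verts K \<Longrightarrow> \<exists>q. (r, q) \<in> adj_rel K"
    and "C \<in> components K"
  shows "2 \<le> card C"
proof -
  obtain r where r: "r \<in> verts K" and C: "C = {y \<in> verts K. (r, y) \<in> (adj_rel K)\<^sup>*}"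
    using assms(3) unfolding components_def by auto
  obtain q where q: "(r, q) \<in> adj_rel K"
    using assms(2)[OF r] by blast
  then have "{r, q} \<subseteq> C" and "r \<noteq> q"
    using r C adj_rel_subset[OF assms(1)] adj_rel_irrefl by fastforce+
  moreover have "finite C"
    using C simple_graph_finite_verts[OF assms(1)] by simp
  ultimately show ?thesis
    by (metis card_2_iff card_mono)
qed

lemma restricted_edge_cut_large_component:
  assumes sg: "simple_graph H" and "verts H \<noteq> {}" and cut: "restricted_edge_cut H S"
    and no_edge: "\<forall>C\<in>components (del_edges H S). card C \<noteq> 2"
  obtains C where "C \<subseteq> verts H" and "3 \<le> card C" and "card C + 3 \<le> card (verts H)"
    and "card (edge_boundary H C) \<le> card S"
proof -
  let ?R = "adj_rel (del_edges H S)"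
  have large: "3 \<le> card C" if "C \<in> components (del_edges H S)" for C
    using cut no_edge that unfolding restricted_edge_cut_def by force
  obtain p q where pq: "p \<in> verts H" "q \<in> verts H" "(p, q) \<notin> ?R\<^sup>*"
    using cut assms(2) unfolding restricted_edge_cut_def graph_connected_def by auto
  define C where "C = {y \<in> verts H. (p, y) \<in> ?R\<^sup>*}"
  define D where "D = {y \<in> verts H. (q, y) \<in> ?R\<^sup>*}"
  have C: "C \<in> components (del_edges H S)" and D: "D \<in> components (del_edges H S)"
    unfolding C_def D_def components_def using pq by auto
  have sym_reach: "sym (?R\<^sup>*)"
    by (intro sym_rtrancl) (auto simp: sym_def adj_rel_sym)
  have "D \<subseteq> verts H - C"
  proof
    fix y assume "y \<in> D"
    then have "(y, q) \<in> ?R\<^sup>*" and "y \<in> verts H"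
      unfolding D_def using sym_reach by (auto dest: symD)
    then show "y \<in> verts H - C"
      unfolding C_def using pq(3) rtrancl_trans[of p y ?R q] by blast
  qed
  then have "card D \<le> card (verts H) - card C"
    using simple_graph_finite_verts[OF sg] C_def
    by (metis (no_types, lifting) card_Diff_subset card_mono finite_Diff finite_subset mem_Collect_eq subsetI)
  moreover have "card C \<le> card (verts H)"
    using simple_graph_finite_verts[OF sg] C_def by (intro card_mono) auto
  moreover have "card (edge_boundary H C) \<le> card S"
    using component_edge_boundary_subset[OF C] cut simple_graph_finite_edges[OF sg]
    unfolding restricted_edge_cut_def by (meson card_mono finite_subset)
  ultimately show ?thesis
    using that[of C] large[OF C] large[OF D] C_def by force
qed

lemma super_restricted_edge_connectedI:
  assumes "simple_graph H" and "verts H \<noteq> {}" and "restricted_edge_cut H T"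
    and "\<And>C. C \<subseteq> verts H \<Longrightarrow> 3 \<le> card C \<Longrightarrow> card C + 3 \<le> card (verts H)
           \<Longrightarrow> card T < card (edge_boundary H C)"
  shows "super_restricted_edge_connected H"
  unfolding super_restricted_edge_connected_def
proof (intro allI impI)
  fix S assume S: "min_restricted_edge_cut H S"
  show "\<exists>C\<in>components (del_edges H S). card C = 2"
  proof (rule ccontr)
    assume no_edge: "\<not> ?thesis"
    have cut: "restricted_edge_cut H S"
      using S unfolding min_restricted_edge_cut_def by blast
    obtain C where C: "C \<subseteq> verts H" "3 \<le> card C" "card C + 3 \<le> card (verts H)"
        and "card (edge_boundary H C) \<le> card S"
      by (rule restricted_edge_cut_large_component[OF assms(1,2) cut]) (use no_edge in blast)
    moreover have "card S \<le> card T"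
      using S assms(3) unfolding min_restricted_edge_cut_def by blast
    ultimately show False
      using assms(4)[OF C] by linarith
  qed
qed

definition fibre_part :: "'a graph \<Rightarrow> int \<Rightarrow> ('a \<Rightarrow> int) \<Rightarrow> int" where
  "fibre_part G n a = (\<Sum>x\<in>verts G. a x * (n - a x))"

definition cross_part :: "'a graph \<Rightarrow> int \<Rightarrow> ('a \<Rightarrow> int) \<Rightarrow> int" where
  "cross_part G n a = (\<Sum>(x, y)\<in>adj_rel G. a x * (n - a y))"

text \<open>If a vertex set of \<open>G \<boxtimes> K\<^sub>n\<close> has \<open>a x\<close> vertices in the fibre over \<open>x\<close>, this
  counts the edges leaving it: those inside a fibre, and those between the fibres over the
  ends of an edge of \<open>G\<close> (see \<open>card_boundary_arcs_strong_product\<close>).\<close>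
definition boundary_count :: "'a graph \<Rightarrow> int \<Rightarrow> ('a \<Rightarrow> int) \<Rightarrow> int" where
  "boundary_count G n a = fibre_part G n a + cross_part G n a"

definition admissible :: "'a graph \<Rightarrow> int \<Rightarrow> ('a \<Rightarrow> int) \<Rightarrow> bool" where
  "admissible G n a \<longleftrightarrow> (\<forall>x\<in>verts G. 0 \<le> a x \<and> a x \<le> n)"

definition split_vertices :: "'a graph \<Rightarrow> int \<Rightarrow> ('a \<Rightarrow> int) \<Rightarrow> 'a set" where
  "split_vertices G n a = {x \<in> verts G. 0 < a x \<and> a x < n}"

lemma boundary_count_along_line:
  "boundary_count G n (\<lambda>x. a x + s * e x) =
     boundary_count G n a
     + s * ((\<Sum>x\<in>verts G. e x * (n - 2 * a x)) + (\<Sum>(x, y)\<in>adj_rel G. e x * (n - a y) - a x * e y))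
     - s\<^sup>2 * ((\<Sum>x\<in>verts G. e x * e x) + (\<Sum>(x, y)\<in>adj_rel G. e x * e y))"
proof -
  have fibre: "fibre_part G n (\<lambda>x. a x + s * e x) =
      (\<Sum>x\<in>verts G. a x * (n - a x) + s * (e x * (n - 2 * a x)) - s\<^sup>2 * (e x * e x))"
    unfolding fibre_part_def by (rule sum.cong) (simp_all add: algebra_simps power2_eq_square)
  have cross: "cross_part G n (\<lambda>x. a x + s * e x) =
      (\<Sum>(x, y)\<in>adj_rel G. a x * (n - a y) + s * (e x * (n - a y) - a x * e y) - s\<^sup>2 * (e x * e y))"
    unfolding cross_part_def by (rule sum.cong) (auto simp: algebra_simps power2_eq_square)
  show ?thesis
    unfolding boundary_count_def fibre cross fibre_part_def cross_part_def
    by (simp add: sum.distrib sum_subtractf sum_distrib_left split_def algebra_simps power2_eq_square)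
qed

definition transfer :: "'a \<Rightarrow> 'a \<Rightarrow> 'a \<Rightarrow> int" where
  "transfer u v x = of_bool (x = u) - of_bool (x = v)"

lemma transfer_curvature_nonneg:
  assumes sg: "simple_graph G" and "u \<in> verts G" and "v \<in> verts G" and "u \<noteq> v"
  shows "0 \<le> (\<Sum>x\<in>verts G. transfer u v x * transfer u v x)
             + (\<Sum>(x, y)\<in>adj_rel G. transfer u v x * transfer u v y)"
proof -
  let ?e = "transfer u v" and ?T = "{(u, v), (v, u)}"
  have "(\<Sum>x\<in>verts G. ?e x * ?e x) = (\<Sum>x\<in>verts G. of_bool (x = u) + of_bool (x = v))"
    using assms(4) unfolding transfer_def by (intro sum.cong) auto
  also have "\<dots> = 2"
    using assms(2,3) simple_graph_finite_verts[OF sg] by (simp add: sum.distrib)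
  finally have diagonal: "(\<Sum>x\<in>verts G. ?e x * ?e x) = 2" .
  have off_diagonal: "- of_bool ((x, y) \<in> ?T) \<le> ?e x * ?e y" if "x \<noteq> y" for x y
    using that assms(4) unfolding transfer_def
    by (cases "x = u"; cases "x = v"; cases "y = u"; cases "y = v") simp_all
  have "(\<Sum>p\<in>adj_rel G. - of_bool (p \<in> ?T)) \<le> (\<Sum>p\<in>adj_rel G. ?e (fst p) * ?e (snd p))"
  proof (rule sum_mono)
    fix p assume p: "p \<in> adj_rel G"
    obtain x y where xy: "p = (x, y)"
      by (cases p)
    then have "x \<noteq> y"
      using p adj_rel_irrefl[of x G] by auto
    then show "- of_bool (p \<in> ?T) \<le> ?e (fst p) * ?e (snd p)"
      using off_diagonal xy by simp
  qed
  moreover have "(\<Sum>p\<in>adj_rel G. of_bool (p \<in> ?T)) = int (card (adj_rel G \<inter> ?T))"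
    using sum_of_bool_eq[OF finite_adj_rel[OF sg] finite_adj_rel[OF sg], of "\<lambda>p. p \<in> ?T"]
    by (simp only: Collect_mem_eq)
  moreover have "card (adj_rel G \<inter> ?T) \<le> 2"
  proof -
    have "card (adj_rel G \<inter> ?T) \<le> card ?T"
      by (intro card_mono) auto
    also have "\<dots> \<le> 2"
      by (rule card_insert_le_m1) simp_all
    finally show ?thesis .
  qed
  moreover have "(\<Sum>p\<in>adj_rel G. - of_bool (p \<in> ?T)) = - (\<Sum>p\<in>adj_rel G. of_bool (p \<in> ?T) :: int)"
    by (rule sum_negf)
  moreover have "(\<Sum>(x, y)\<in>adj_rel G. ?e x * ?e y) = (\<Sum>p\<in>adj_rel G. ?e (fst p) * ?e (snd p))"
    by (simp only: split_def)
  ultimately show ?thesis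
    using diagonal by linarith
qed

lemma smoothing_step:
  assumes sg: "simple_graph G" and adm: "admissible G n a"
    and u: "u \<in> split_vertices G n a" and v: "v \<in> split_vertices G n a" and "u \<noteq> v"
  obtains b where "admissible G n b" and "sum b (verts G) = sum a (verts G)"
    and "split_vertices G n b \<subset> split_vertices G n a"
    and "boundary_count G n b \<le> boundary_count G n a"
proof -
  let ?e = "transfer u v"
  define B where "B = (\<Sum>x\<in>verts G. ?e x * (n - 2 * a x))
                     + (\<Sum>(x, y)\<in>adj_rel G. ?e x * (n - a y) - a x * ?e y)"
  define s where "s = (if 0 \<le> B then - min (a u) (n - a v) else min (n - a u) (a v))"
  define b where "b x = a x + s * ?e x" for x
  have uv: "u \<in> verts G" "v \<in> verts G" "0 < a u" "a u < n" "0 < a v" "a v < n"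
    using u v unfolding split_vertices_def by auto
  have b: "b x = (if x = u then a u + s else if x = v then a v - s else a x)" for x
    unfolding b_def transfer_def using \<open>u \<noteq> v\<close> by auto
  \<comment> \<open>\<open>s\<close> moves as much weight from \<open>v\<close> to \<open>u\<close> (or back) as admissibility allows,
    against the sign of the slope \<open>B\<close>\<close>
  have "s * B \<le> 0"
    unfolding s_def using uv by (auto simp: mult_le_0_iff)
  moreover have "0 \<le> s\<^sup>2 * ((\<Sum>x\<in>verts G. ?e x * ?e x) + (\<Sum>(x, y)\<in>adj_rel G. ?e x * ?e y))"
    using transfer_curvature_nonneg[OF sg uv(1,2) \<open>u \<noteq> v\<close>] by simp
  ultimately have "boundary_count G n b \<le> boundary_count G n a"
    unfolding b_def boundary_count_along_line B_def by linarith
  moreover have "admissible G n b"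
    using adm uv unfolding admissible_def b s_def by auto
  moreover have "sum b (verts G) = sum a (verts G)"
    using uv simple_graph_finite_verts[OF sg]
    by (simp add: b_def sum.distrib transfer_def sum_subtractf flip: sum_distrib_left)
  moreover have "split_vertices G n b \<subset> split_vertices G n a"
  proof -
    have "split_vertices G n b \<subseteq> split_vertices G n a"
      unfolding split_vertices_def b using u v by (auto simp: split_vertices_def)
    moreover have "u \<notin> split_vertices G n b \<or> v \<notin> split_vertices G n b"
      unfolding split_vertices_def b s_def using \<open>u \<noteq> v\<close> by (auto simp: min_def)
    ultimately show ?thesis
      using u v by blast
  qed
  ultimately show ?thesis
    using that by blast
qed

lemma smoothing:
  assumes sg: "simple_graph G" and "admissible G n a"
  obtains b where "admissible G n b" and "sum b (verts G) = sum a (verts G)"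
    and "card (split_vertices G n b) \<le> 1"
    and "boundary_count G n b \<le> boundary_count G n a"
  using assms(2)
proof (induction "card (split_vertices G n a)" arbitrary: a rule: less_induct)
  case less
  have fin: "finite (split_vertices G n c)" for c
    using simple_graph_finite_verts[OF sg] unfolding split_vertices_def by simp
  show ?case
  proof (cases "card (split_vertices G n a) \<le> 1")
    case True
    then show ?thesis
      using less.prems by blast
  next
    case False
    then obtain u v where "u \<in> split_vertices G n a" "v \<in> split_vertices G n a" "u \<noteq> v"
      using fin[of a] by (metis card_le_Suc0_iff_eq One_nat_def)
    then obtain b where b: "admissible G n b" "sum b (verts G) = sum a (verts G)"
      "split_vertices G n b \<subset> split_vertices G n a" "boundary_count G n b \<le> boundary_count G n a"
      using smoothing_step[OF sg less.prems(2)] by blast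
    have "card (split_vertices G n b) < card (split_vertices G n a)"
      using b(3) fin by (rule psubset_card_mono[rotated])
    then show ?thesis
      using less.hyps[OF _ _ b(1)] less.prems(1) b by fastforce
  qed
qed

lemma fibre_part_nonneg: "admissible G n a \<Longrightarrow> 0 \<le> fibre_part G n a"
  unfolding fibre_part_def admissible_def by (intro sum_nonneg) auto

lemma boundary_count_complement:
  assumes "simple_graph G"
  shows "boundary_count G n (\<lambda>x. n - a x) = boundary_count G n a"
proof -
  have swap: "prod.swap ` adj_rel G = adj_rel G"
    by (auto intro: adj_rel_sym)
  have "cross_part G n (\<lambda>x. n - a x) = (\<Sum>(x, y)\<in>adj_rel G. a y * (n - a x))"
    unfolding cross_part_def by (intro sum.cong) (auto simp: algebra_simps)
  also have "\<dots> = (\<Sum>(x, y)\<in>prod.swap ` adj_rel G. a x * (n - a y))"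
    by (simp add: sum.reindex split_def comp_def)
  finally have "cross_part G n (\<lambda>x. n - a x) = cross_part G n a"
    unfolding swap cross_part_def .
  moreover have "fibre_part G n (\<lambda>x. n - a x) = fibre_part G n a"
    unfolding fibre_part_def by (intro sum.cong) (auto simp: algebra_simps)
  ultimately show ?thesis
    unfolding boundary_count_def by simp
qed

lemma boundary_count_concentrated:
  assumes sg: "simple_graph G" and w: "w \<in> verts G"
    and zero: "\<And>x. x \<in> verts G \<Longrightarrow> x \<noteq> w \<Longrightarrow> a x = 0"
  shows "boundary_count G n a = a w * (n - a w) + n * a w * int (degree G w)"
proof -
  have fin: "finite (verts G)"
    using simple_graph_finite_verts[OF sg] .
  have "fibre_part G n a = a w * (n - a w) + (\<Sum>x\<in>verts G - {w}. a x * (n - a x))"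
    unfolding fibre_part_def using sum.remove[OF fin w] .
  also have "(\<Sum>x\<in>verts G - {w}. a x * (n - a x)) = 0"
    using zero by (intro sum.neutral) auto
  finally have fibre: "fibre_part G n a = a w * (n - a w)"
    by simp
  have "cross_part G n a = (\<Sum>p\<in>adj_rel G. if fst p = w then n * a w else 0)"
  proof (unfold cross_part_def split_def, intro sum.cong refl)
    fix p assume "p \<in> adj_rel G"
    then have "fst p \<in> verts G" "snd p \<in> verts G" "fst p \<noteq> snd p"
      using adj_rel_subset[OF sg] adj_rel_irrefl[of "fst p" G] by (auto simp: mem_Times_iff)
    then show "a (fst p) * (n - a (snd p)) = (if fst p = w then n * a w else 0)"
      using zero by auto
  qed
  also have "\<dots> = (\<Sum>p\<in>{p \<in> adj_rel G. fst p = w}. n * a w)"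
    by (rule sum.inter_filter[OF finite_adj_rel[OF sg], symmetric])
  also have "{p \<in> adj_rel G. fst p = w} = Pair w ` {y. (w, y) \<in> adj_rel G}"
    by force
  finally have cross: "cross_part G n a = n * a w * int (degree G w)"
    by (simp add: card_image inj_on_def degree_eq_card_adj[OF sg])
  show ?thesis
    unfolding boundary_count_def fibre cross ..
qed

lemma cross_part_indicator:
  assumes "simple_graph G"
  shows "cross_part G n (\<lambda>x. if x \<in> A then n else 0) = n\<^sup>2 * int (card (edge_boundary G A))"
proof -
  have "cross_part G n (\<lambda>x. if x \<in> A then n else 0)
      = (\<Sum>p\<in>adj_rel G. if fst p \<in> A \<and> snd p \<notin> A then n\<^sup>2 else 0)"
    unfolding cross_part_def split_def by (intro sum.cong) (auto simp: power2_eq_square)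
  also have "\<dots> = (\<Sum>p\<in>{p \<in> adj_rel G. fst p \<in> A \<and> snd p \<notin> A}. n\<^sup>2)"
    by (rule sum.inter_filter[OF finite_adj_rel[OF assms], symmetric])
  also have "{p \<in> adj_rel G. fst p \<in> A \<and> snd p \<notin> A} = boundary_arcs G A"
    unfolding boundary_arcs_def using adj_rel_iff[OF assms] adj_rel_subset[OF assms] by auto
  finally show ?thesis
    by (simp add: card_edge_boundary)
qed

text \<open>The cross part is affine in the weight at a single vertex because \<open>adj_rel G\<close> has no loops.\<close>
lemma cross_part_interpolate:
  assumes sg: "simple_graph G" and "w \<notin> A"
    and a: "\<And>x. x \<in> verts G \<Longrightarrow> x \<noteq> w \<Longrightarrow> a x = (if x \<in> A then n else 0)"
  shows "n * cross_part G n a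
       = (n - a w) * cross_part G n (\<lambda>x. if x \<in> A then n else 0)
         + a w * cross_part G n (\<lambda>x. if x \<in> insert w A then n else 0)"
proof -
  let ?\<alpha> = "\<lambda>x. if x \<in> A then n else 0" and ?\<beta> = "\<lambda>x. if x \<in> insert w A then n else 0"
  have "n * cross_part G n a = (\<Sum>p\<in>adj_rel G. n * (a (fst p) * (n - a (snd p))))"
    unfolding cross_part_def split_def by (simp add: sum_distrib_left)
  also have "\<dots> = (\<Sum>p\<in>adj_rel G. (n - a w) * (?\<alpha> (fst p) * (n - ?\<alpha> (snd p)))
                                    + a w * (?\<beta> (fst p) * (n - ?\<beta> (snd p))))"
  proof (intro sum.cong refl)
    fix p assume "p \<in> adj_rel G"
    then have "fst p \<in> verts G" "snd p \<in> verts G" "fst p \<noteq> snd p"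
      using adj_rel_subset[OF sg] adj_rel_irrefl[of "fst p" G] by (auto simp: mem_Times_iff)
    then show "n * (a (fst p) * (n - a (snd p)))
        = (n - a w) * (?\<alpha> (fst p) * (n - ?\<alpha> (snd p))) + a w * (?\<beta> (fst p) * (n - ?\<beta> (snd p)))"
      using a \<open>w \<notin> A\<close> by (cases "fst p = w"; cases "snd p = w") (auto simp: algebra_simps)
  qed
  also have "\<dots> = (n - a w) * cross_part G n ?\<alpha> + a w * cross_part G n ?\<beta>"
    unfolding cross_part_def split_def by (simp add: sum.distrib sum_distrib_left)
  finally show ?thesis .
qed

lemma cross_part_ge_edge_connectivity:
  assumes sg: "simple_graph G" and "0 < n" and w: "w \<in> verts G" and "0 \<le> a w" and "a w \<le> n"
    and A: "A \<subseteq> verts G" "w \<notin> A" "A \<noteq> {}" "insert w A \<noteq> verts G"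
    and a: "\<And>x. x \<in> verts G \<Longrightarrow> x \<noteq> w \<Longrightarrow> a x = (if x \<in> A then n else 0)"
  shows "n\<^sup>2 * int (edge_connectivity G) \<le> cross_part G n a"
proof -
  let ?conn = "int (edge_connectivity G)"
  obtain u where u: "u \<in> A"
    using A by blast
  have "insert w A \<subset> verts G"
    using A w by auto
  then obtain v where v: "v \<in> verts G" "v \<notin> insert w A"
    using psubset_imp_ex_mem by blast
  have "?conn \<le> int (card (edge_boundary G A))"
    using edge_connectivity_le_card_edge_boundary[OF sg u subsetD[OF A(1) u] w A(2)] by simp
  moreover have "?conn \<le> int (card (edge_boundary G (insert w A)))"
    using edge_connectivity_le_card_edge_boundary[OF sg insertI1 w v] by simp
  ultimately have "(n - a w) * (n\<^sup>2 * ?conn) + a w * (n\<^sup>2 * ?conn)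
      \<le> (n - a w) * (n\<^sup>2 * int (card (edge_boundary G A)))
        + a w * (n\<^sup>2 * int (card (edge_boundary G (insert w A))))"
    using assms(4,5) by (intro add_mono mult_left_mono) auto
  then have "n * (n\<^sup>2 * ?conn)
      \<le> (n - a w) * (n\<^sup>2 * int (card (edge_boundary G A)))
        + a w * (n\<^sup>2 * int (card (edge_boundary G (insert w A))))"
    by (simp add: algebra_simps)
  also have "\<dots> = n * cross_part G n a"
    using cross_part_interpolate[OF sg A(2) a] unfolding cross_part_indicator[OF sg] by simp
  finally show ?thesis
    using \<open>0 < n\<close> by simp
qed

lemma sum_concentrated:
  "finite A \<Longrightarrow> w \<in> A \<Longrightarrow> (\<And>x. x \<in> A \<Longrightarrow> x \<noteq> w \<Longrightarrow> f x = 0) \<Longrightarrow> sum f A = f w"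
  using sum.mono_neutral_right[of A "{w}" f] by auto

lemma concentrated_boundary_count_gt:
  assumes sg: "simple_graph G" and n: "4 \<le> n" and d: "1 \<le> min_degree G"
    and adm: "admissible G n a" and w: "w \<in> verts G"
    and zero: "\<And>x. x \<in> verts G \<Longrightarrow> x \<noteq> w \<Longrightarrow> a x = 0" and lower: "3 \<le> sum a (verts G)"
  shows "2 * n * int (min_degree G) + 2 * n - 4 < boundary_count G n a"
proof -
  let ?d = "int (min_degree G)" and ?k = "a w"
  have k: "3 \<le> ?k" "?k \<le> n"
    using lower adm w sum_concentrated[OF simple_graph_finite_verts[OF sg] w zero]
    unfolding admissible_def by auto
  have "?d \<le> int (degree G w)"
    using min_degree_le[OF sg w] by simp
  then have e1: "n * ?k * ?d \<le> n * ?k * int (degree G w)"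
    using n k by (intro mult_left_mono) auto
  have "0 \<le> (n * ?d - n) * (?k - 2)"
    using n k d by (intro mult_nonneg_nonneg) (auto simp: algebra_simps)
  then have e2: "0 \<le> n * ?k * ?d - 2 * n * ?d - n * ?k + 2 * n"
    by (simp add: algebra_simps)
  have "0 \<le> (?k - 3) * (2 * n - ?k - 3)"
    using n k by (intro mult_nonneg_nonneg) auto
  then have e3: "0 \<le> 2 * n * ?k - ?k * ?k - 6 * n + 9"
    by (simp add: algebra_simps)
  have "?k * (n - ?k) = n * ?k - ?k * ?k"
    by (simp add: algebra_simps)
  moreover have "boundary_count G n a = ?k * (n - ?k) + n * ?k * int (degree G w)"
    by (rule boundary_count_concentrated[OF sg w zero])
  ultimately show ?thesis
    using e1 e2 e3 n by linarith
qed

lemma one_split_boundary_count_gt: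
  fixes n :: int
  assumes sg: "simple_graph G" and n: "4 \<le> n" and d: "1 \<le> min_degree G"
    and big: "2 * n * int (min_degree G) + 2 * n - 4 < n\<^sup>2 * int (edge_connectivity G)"
    and adm: "admissible G n b" and w: "w \<in> verts G" and split: "split_vertices G n b \<subseteq> {w}"
    and lower: "3 \<le> sum b (verts G)" and upper: "sum b (verts G) \<le> int (card (verts G)) * n - 3"
  shows "2 * n * int (min_degree G) + 2 * n - 4 < boundary_count G n b"
proof -
  define A where "A = {x \<in> verts G - {w}. b x = n}"
  have b_off: "b x = (if x \<in> A then n else 0)" if "x \<in> verts G" "x \<noteq> w" for x
    using adm split that unfolding admissible_def split_vertices_def A_def by force
  show ?thesis
  proof (cases "A = {}")
    case True
    then show ?thesis
      using concentrated_boundary_count_gt[OF sg n d adm w _ lower] b_off by simp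
  next
    case False
    show ?thesis
    proof (cases "insert w A = verts G")
      case True
      \<comment> \<open>pass to the complementary vertex set, which lies in the fibre over \<open>w\<close>\<close>
      let ?c = "\<lambda>x. n - b x"
      have "admissible G n ?c"
        using adm unfolding admissible_def by auto
      moreover have "?c x = 0" if "x \<in> verts G" "x \<noteq> w" for x
        using b_off that True by auto
      moreover have "3 \<le> sum ?c (verts G)"
        using upper by (simp add: sum_subtractf)
      ultimately have "2 * n * int (min_degree G) + 2 * n - 4 < boundary_count G n ?c"
        by (intro concentrated_boundary_count_gt[OF sg n d _ w])
      then show ?thesis
        using boundary_count_complement[OF sg] by simp
    next
      case False
      have "A \<subseteq> verts G" "w \<notin> A"
        unfolding A_def by auto
      then have "n\<^sup>2 * int (edge_connectivity G) \<le> cross_part G n b"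
        using cross_part_ge_edge_connectivity[OF sg _ w] adm w b_off \<open>A \<noteq> {}\<close> False n
        unfolding admissible_def by auto
      then show ?thesis
        using fibre_part_nonneg[OF adm] big unfolding boundary_count_def by linarith
    qed
  qed
qed

lemma subset_singleton_if_card_le_1:
  assumes "finite S" and "card S \<le> 1" and "S \<subseteq> V" and "V \<noteq> {}"
  obtains w where "w \<in> V" and "S \<subseteq> {w}"
proof (cases "S = {}")
  case True
  then show ?thesis
    using that assms(4) by blast
next
  case False
  then obtain w where "w \<in> S"
    by blast
  moreover have "\<forall>x\<in>S. \<forall>y\<in>S. x = y"
    using assms(1,2) card_le_Suc0_iff_eq by (metis One_nat_def)
  ultimately show ?thesis
    using that assms(3) by blast
qed

lemma boundary_count_gt:
  fixes n :: int
  assumes sg: "simple_graph G" and n: "4 \<le> n" and d: "1 \<le> min_degree G"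
    and big: "2 * n * int (min_degree G) + 2 * n - 4 < n\<^sup>2 * int (edge_connectivity G)"
    and adm: "admissible G n a" and lower: "3 \<le> sum a (verts G)"
    and upper: "sum a (verts G) \<le> int (card (verts G)) * n - 3"
  shows "2 * n * int (min_degree G) + 2 * n - 4 < boundary_count G n a"
proof -
  obtain b where b: "admissible G n b" "sum b (verts G) = sum a (verts G)"
      "card (split_vertices G n b) \<le> 1" "boundary_count G n b \<le> boundary_count G n a"
    using smoothing[OF sg adm] .
  have "finite (split_vertices G n b)" and "split_vertices G n b \<subseteq> verts G"
    using simple_graph_finite_verts[OF sg] unfolding split_vertices_def by auto
  moreover have "verts G \<noteq> {}"
    using lower by auto
  ultimately obtain w where "w \<in> verts G" and "split_vertices G n b \<subseteq> {w}"
    by (rule subset_singleton_if_card_le_1[OF _ b(3)])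
  then have "2 * n * int (min_degree G) + 2 * n - 4 < boundary_count G n b"
    using one_split_boundary_count_gt[OF sg n d big b(1)] b(2) lower upper by simp
  then show ?thesis
    using b(4) by linarith
qed

lemma card_eq_sum_card_fibres:
  assumes "finite A" and "finite T" and "f ` A \<subseteq> T"
  shows "card A = (\<Sum>t\<in>T. card {a \<in> A. f a = t})"
proof -
  have "card A = (\<Sum>a\<in>A. 1)"
    by simp
  also have "\<dots> = (\<Sum>t\<in>T. \<Sum>a\<in>{a \<in> A. f a = t}. 1)"
    by (rule sum.group[OF assms, symmetric])
  also have "\<dots> = (\<Sum>t\<in>T. card {a \<in> A. f a = t})"
    by simp
  finally show ?thesis .
qed

lemma verts_strong_product: "verts (strong_product G H) = verts G \<times> verts H"
  unfolding strong_product_def verts_def by simp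

lemma verts_complete_graph: "verts (complete_graph n) = {0..<n}"
  unfolding complete_graph_def verts_def by simp

lemma edge_complete_graph_iff: "{a, b} \<in> edges (complete_graph n) \<longleftrightarrow> a < n \<and> b < n \<and> a \<noteq> b"
  unfolding complete_graph_def edges_def by (auto simp: doubleton_eq_iff)

lemma edge_strong_product_iff:
  "{(x1, y1), (x2, y2)} \<in> edges (strong_product G H) \<longleftrightarrow>
     x1 \<in> verts G \<and> x2 \<in> verts G \<and> y1 \<in> verts H \<and> y2 \<in> verts H \<and>
     ((x1 = x2 \<and> {y1, y2} \<in> edges H) \<or> (y1 = y2 \<and> {x1, x2} \<in> edges G) \<or>
      ({x1, x2} \<in> edges G \<and> {y1, y2} \<in> edges H))"
  unfolding strong_product_def edges_def by (auto simp: doubleton_eq_iff insert_commute)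

lemma edge_strong_product_complete_iff:
  assumes "simple_graph G"
  shows "{p, q} \<in> edges (strong_product G (complete_graph n)) \<longleftrightarrow>
     p \<in> verts G \<times> {0..<n} \<and> q \<in> verts G \<times> {0..<n} \<and> p \<noteq> q \<and>
     (fst p = fst q \<or> (fst p, fst q) \<in> adj_rel G)"
proof -
  obtain x1 y1 x2 y2 where p: "p = (x1, y1)" and q: "q = (x2, y2)"
    by (cases p, cases q)
  show ?thesis
    unfolding p q edge_strong_product_iff using simple_graph_edgeD[OF assms] adj_rel_iff[OF assms]
    by (auto simp: edge_complete_graph_iff verts_complete_graph insert_commute)
qed

lemma simple_graph_strong_product_complete:
  assumes "simple_graph G"
  shows "simple_graph (strong_product G (complete_graph n))"
  unfolding simple_graph_def
proof (intro conjI ballI)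
  show "finite (verts (strong_product G (complete_graph n)))"
    using simple_graph_finite_verts[OF assms] by (simp add: verts_strong_product verts_complete_graph)
  fix e assume e: "e \<in> edges (strong_product G (complete_graph n))"
  then obtain p q where pq: "e = {p, q}"
    unfolding strong_product_def edges_def by auto
  then have "{p, q} \<in> edges (strong_product G (complete_graph n))"
    using e by simp
  then have "p \<noteq> q" "p \<in> verts G \<times> {0..<n}" "q \<in> verts G \<times> {0..<n}"
    by (simp_all add: edge_strong_product_complete_iff[OF assms])
  then show "\<exists>p q. p \<noteq> q \<and> p \<in> verts (strong_product G (complete_graph n))
      \<and> q \<in> verts (strong_product G (complete_graph n)) \<and> e = {p, q}"
    using pq by (intro exI[of _ p] exI[of _ q]) (simp add: verts_strong_product verts_complete_graph)
qed

definition fibre_size :: "('a \<times> nat) set \<Rightarrow> 'a \<Rightarrow> nat" where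
  "fibre_size X x = card {u \<in> X. fst u = x}"

lemma card_fibre_complement:
  assumes "X \<subseteq> V \<times> {0..<n}" and "y \<in> V"
  shows "card {v \<in> V \<times> {0..<n} - X. fst v = y} = n - fibre_size X y"
proof -
  have "{v \<in> V \<times> {0..<n} - X. fst v = y} = {y} \<times> {0..<n} - {u \<in> X. fst u = y}"
    using assms by auto
  moreover have "{u \<in> X. fst u = y} \<subseteq> {y} \<times> {0..<n}"
    using assms by auto
  ultimately show ?thesis
    unfolding fibre_size_def by (simp add: card_Diff_subset finite_subset card_cartesian_product)
qed

lemma fibre_size_le:
  assumes "X \<subseteq> V \<times> {0..<n}"
  shows "fibre_size X x \<le> n"
proof -
  have "{u \<in> X. fst u = x} \<subseteq> {x} \<times> {0..<n}"
    using assms by auto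
  then show ?thesis
    unfolding fibre_size_def using card_mono[of "{x} \<times> {0..<n}"] by (simp add: card_cartesian_product)
qed

lemma sum_fibre_size:
  assumes "finite V" and "X \<subseteq> V \<times> {0..<n}"
  shows "(\<Sum>x\<in>V. fibre_size X x) = card X"
  unfolding fibre_size_def
  using card_eq_sum_card_fibres[of X V fst] assms finite_subset by fastforce

lemma card_boundary_arcs_strong_product:
  assumes sg: "simple_graph G" and X: "X \<subseteq> verts G \<times> {0..<n}"
  shows "int (card (boundary_arcs (strong_product G (complete_graph n)) X))
       = boundary_count G (int n) (\<lambda>x. int (fibre_size X x))"
proof -
  let ?V = "verts G" and ?a = "\<lambda>x. int (fibre_size X x)"
  let ?W = "?V \<times> {0..<n} - X" and ?T = "Id_on ?V \<union> adj_rel G" and ?f = "map_prod fst fst"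
  have fin: "finite ?V"
    using simple_graph_finite_verts[OF sg] .
  have arcs: "boundary_arcs (strong_product G (complete_graph n)) X = {p \<in> X \<times> ?W. ?f p \<in> ?T}"
    unfolding boundary_arcs_def using X
    by (auto simp: edge_strong_product_complete_iff[OF sg] verts_strong_product verts_complete_graph)
  have fibres: "card {p \<in> X \<times> ?W. ?f p = (x, y)} = fibre_size X x * (n - fibre_size X y)"
    if "y \<in> ?V" for x y
  proof -
    have "{p \<in> X \<times> ?W. ?f p = (x, y)} = {u \<in> X. fst u = x} \<times> {v \<in> ?W. fst v = y}"
      by auto
    then show ?thesis
      using card_fibre_complement[OF X that] by (simp add: card_cartesian_product fibre_size_def)
  qed
  have "finite (X \<times> ?W)"
    using fin finite_subset[OF X] by simp
  moreover have "finite ?T"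
    using fin finite_adj_rel[OF sg] finite_subset[of "Id_on ?V" "?V \<times> ?V"] by auto
  ultimately have "card {p \<in> X \<times> ?W. ?f p \<in> ?T}
      = (\<Sum>t\<in>?T. card {p \<in> {p \<in> X \<times> ?W. ?f p \<in> ?T}. ?f p = t})"
    by (intro card_eq_sum_card_fibres) auto
  also have "\<dots> = (\<Sum>t\<in>?T. card {p \<in> X \<times> ?W. ?f p = t})"
    by (intro sum.cong refl arg_cong[where f = card]) auto
  also have "\<dots> = (\<Sum>t\<in>Id_on ?V. card {p \<in> X \<times> ?W. ?f p = t})
                  + (\<Sum>t\<in>adj_rel G. card {p \<in> X \<times> ?W. ?f p = t})"
    using fin finite_adj_rel[OF sg] adj_rel_irrefl[of _ G]
    by (intro sum.union_disjoint) (auto simp: Id_on_def)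
  also have "(\<Sum>t\<in>Id_on ?V. card {p \<in> X \<times> ?W. ?f p = t})
      = (\<Sum>x\<in>?V. fibre_size X x * (n - fibre_size X x))"
    unfolding Id_on_def by (simp add: sum.UNION_disjoint fin fibres)
  also have "(\<Sum>t\<in>adj_rel G. card {p \<in> X \<times> ?W. ?f p = t})
      = (\<Sum>(x, y)\<in>adj_rel G. fibre_size X x * (n - fibre_size X y))"
    using adj_rel_subset[OF sg] by (intro sum.cong) (auto simp: fibres)
  finally show ?thesis
    unfolding arcs boundary_count_def fibre_part_def cross_part_def
    using fibre_size_le[OF X] by (simp add: of_nat_diff split_def)
qed

lemma adj_rel_del_edge_boundary:
  assumes "{r, q} \<in> edges H" and "r \<noteq> q" and "r \<in> X \<longleftrightarrow> q \<in> X"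
  shows "(r, q) \<in> adj_rel (del_edges H (edge_boundary H X))"
  using assms unfolding adj_rel_def edge_boundary_def boundary_arcs_def
  by (auto simp: doubleton_eq_iff)

lemma two_vertex_fibre_restricted_edge_cut:
  assumes sg: "simple_graph G" and n: "4 \<le> n" and w: "w \<in> verts G"
  shows "restricted_edge_cut (strong_product G (complete_graph n))
           (edge_boundary (strong_product G (complete_graph n)) {(w, 0), (w, 1)})"
proof -
  let ?H = "strong_product G (complete_graph n)" and ?X = "{(w, 0), (w, 1)}"
  let ?K = "del_edges ?H (edge_boundary ?H ?X)"
  have sgH: "simple_graph ?H"
    by (rule simple_graph_strong_product_complete[OF sg])
  have vH: "verts ?H = verts G \<times> {0..<n}"
    by (simp add: verts_strong_product verts_complete_graph)
  have partner: "\<exists>q. (r, q) \<in> adj_rel ?K" if rK: "r \<in> verts ?K" for r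
  proof -
    obtain x i where r: "r = (x, i)" "x \<in> verts G" "i < n"
      using rK vH by auto
    \<comment> \<open>a second vertex in the fibre of \<open>r\<close> on the same side of the cut\<close>
    define j where "j = (if r \<in> ?X then 1 - i else if i = 2 then 3 else 2)"
    have "j < n" "j \<noteq> i" "r \<in> ?X \<longleftrightarrow> (x, j) \<in> ?X"
      using n r(1,3) w unfolding j_def by auto
    then have "(r, (x, j)) \<in> adj_rel ?K"
      using r by (intro adj_rel_del_edge_boundary) (auto simp: edge_strong_product_complete_iff[OF sg])
    then show ?thesis ..
  qed
  have "\<not> graph_connected ?K"
    using del_edge_boundary_disconnected[OF sgH, of "(w, 0)" ?X "(w, 2)"] n w vH by auto
  moreover have "2 \<le> card C" if "C \<in> components ?K" for C
    using components_card_ge_2[OF simple_graph_del_edges[OF sgH] partner that] by blast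
  ultimately show ?thesis
    unfolding restricted_edge_cut_def using edge_boundary_subset[of ?H] by blast
qed

lemma card_two_vertex_fibre_edge_boundary:
  assumes sg: "simple_graph G" and n: "4 \<le> n" and w: "w \<in> verts G"
  shows "int (card (edge_boundary (strong_product G (complete_graph n)) {(w, 0), (w, 1)}))
       = 2 * (int n - 2) + 2 * int n * int (degree G w)"
proof -
  let ?X = "{(w, 0), (w, 1)}"
  have X: "?X \<subseteq> verts G \<times> {0..<n}"
    using n w by auto
  have "int (fibre_size ?X x) = (if x = w then 2 else 0)" for x
  proof -
    have fibre: "{u \<in> ?X. fst u = x} = (if x = w then ?X else {})"
      by auto
    show ?thesis
      unfolding fibre_size_def fibre by simp
  qed
  then show ?thesis
    unfolding card_edge_boundary card_boundary_arcs_strong_product[OF sg X]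
    by (simp add: boundary_count_concentrated[OF sg w] algebra_simps)
qed

lemma card_edge_boundary_strong_product_gt:
  assumes sg: "simple_graph G" and n: "4 \<le> n" and d: "1 \<le> min_degree G"
    and big: "2 * int n * int (min_degree G) + 2 * int n - 4 < int n ^ 2 * int (edge_connectivity G)"
    and C: "C \<subseteq> verts (strong_product G (complete_graph n))" "3 \<le> card C"
      "card C + 3 \<le> card (verts (strong_product G (complete_graph n)))"
  shows "2 * int n * int (min_degree G) + 2 * int n - 4
       < int (card (edge_boundary (strong_product G (complete_graph n)) C))"
proof -
  have CV: "C \<subseteq> verts G \<times> {0..<n}"
    using C(1) by (simp add: verts_strong_product verts_complete_graph)
  let ?a = "\<lambda>x. int (fibre_size C x)"
  have "admissible G (int n) ?a"
    unfolding admissible_def using fibre_size_le[OF CV] by simp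
  moreover have "sum ?a (verts G) = int (card C)"
    using sum_fibre_size[OF simple_graph_finite_verts[OF sg] CV] by (simp flip: of_nat_sum)
  moreover have "card C + 3 \<le> card (verts G) * n"
    using C(3) by (simp add: verts_strong_product verts_complete_graph card_cartesian_product)
  then have "int (card C) \<le> int (card (verts G)) * int n - 3"
    by (simp flip: of_nat_mult)
  ultimately have "2 * int n * int (min_degree G) + 2 * int n - 4 < boundary_count G (int n) ?a"
    using C(2) by (intro boundary_count_gt[OF sg _ d big]) (use n in auto)
  then show ?thesis
    unfolding card_edge_boundary card_boundary_arcs_strong_product[OF sg CV] .
qed

theorem corollary3p9:
  fixes G :: "'a graph" and n :: nat
  assumes "simple_graph G" and "graph_connected G" and "card (verts G) \<ge> 2"
    and "n \<ge> 4"
    and "min (n^2 * edge_connectivity G) ((n - 1) * (card (verts G) + 2 * card (edges G)))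
           > 2 * n * min_degree G + 2 * n - 4"
  shows "super_restricted_edge_connected (strong_product G (complete_graph n))"
proof -
  let ?H = "strong_product G (complete_graph n)"
  note sg = assms(1) and n = assms(4)
  have "verts G \<noteq> {}"
    using assms(3) by auto
  then obtain w where w: "w \<in> verts G" "degree G w = min_degree G"
    by (rule min_degree_attained[OF sg])
  then have d: "1 \<le> min_degree G"
    using degree_pos_if_connected[OF sg assms(2,3)] by fastforce
  have "2 * n * min_degree G + 2 * n - 4 < n ^ 2 * edge_connectivity G"
    using assms(5) by simp
  moreover have "int (2 * n * min_degree G + 2 * n - 4) = 2 * int n * int (min_degree G) + 2 * int n - 4"
    using n by (simp add: of_nat_diff)
  ultimately have big: "2 * int n * int (min_degree G) + 2 * int n - 4
      < int n ^ 2 * int (edge_connectivity G)"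
    by (metis of_nat_less_iff of_nat_mult of_nat_power)
  show ?thesis
  proof (rule super_restricted_edge_connectedI[OF simple_graph_strong_product_complete[OF sg] _
        two_vertex_fibre_restricted_edge_cut[OF sg n w(1)]])
    show "verts ?H \<noteq> {}"
      using w n by (auto simp: verts_strong_product verts_complete_graph)
    fix C assume "C \<subseteq> verts ?H" "3 \<le> card C" "card C + 3 \<le> card (verts ?H)"
    then have "2 * int n * int (min_degree G) + 2 * int n - 4 < int (card (edge_boundary ?H C))"
      by (rule card_edge_boundary_strong_product_gt[OF sg n d big])
    then show "card (edge_boundary ?H {(w, 0), (w, 1)}) < card (edge_boundary ?H C)"
      using card_two_vertex_fibre_edge_boundary[OF sg n w(1)] unfolding w(2)
      by (simp add: algebra_simps)
  qed
qed

end
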